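(* Let $G$ be a finitely generated, torsion-free, $2$-step nilpotent group with Malcev basis $(A;C)=(a_1,\dots,a_n;c_1,\dots,c_m)$, $n\ge 2$. Assume $[a_i,a_j]\neq1$ for all $i\neq j$ and that $a_i$ is c-small for every $i=1,\dots,n$. Then the maximal ring of scalars of $G$ is isomorphic to $\mathbb{Z}$.
   Context: Commutators: $[g,h]=g^{-1}h^{-1}gh$. A Malcev basis is a pair $(A;C)$ with $C=\{c_1,\dots,c_m\}$ a basis of a free abelian subgroup with $G'\le\langle C\rangle\le Z(G)$ and $A=\{a_1,\dots,a_n\}$ such that $G/\langle C\rangle$ is free abelian with basis $\{a_i\langle C\rangle\}$. An element $g$ is c-small if its centralizer equals $\{g^t z\mid t\in\mathbb{Z},\ z\in Z(G)\}$. Rings are associative with identity. Let $f:G/Z(G)\times G/Z(G)\to G'$, $f(gZ(G),hZ(G))=[g,h]$. A commutative ring $R$ is a ring of scalars of $G$ if there are faithful actions of $R$ by endomorphisms on $M=G/Z(G)$ and $N=G'$ with $f(rx,y)=f(x,ry)=rf(x,y)$ for all $r\in R$, $x,y\in M$. Identifying each ring of scalars with its image in $\mathrm{End}(M)$, the maximal ring of scalars is the one containing all others. *)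

theory Defs
  imports "HOL-Algebra.UnivPoly" "HOL-Algebra.Subrings" "HOL-Algebra.Coset" "HOL-Algebra.Generated_Groups"
begin

definition gcomm :: "('a, 'b) monoid_scheme \<Rightarrow> 'a \<Rightarrow> 'a \<Rightarrow> 'a" where
  "gcomm G g h = inv\<^bsub>G\<^esub> g \<otimes>\<^bsub>G\<^esub> inv\<^bsub>G\<^esub> h \<otimes>\<^bsub>G\<^esub> g \<otimes>\<^bsub>G\<^esub> h"

definition derived_sub :: "('a, 'b) monoid_scheme \<Rightarrow> 'a set" where
  "derived_sub G = generate G {gcomm G g h | g h. g \<in> carrier G \<and> h \<in> carrier G}"

definition gcenter :: "('a, 'b) monoid_scheme \<Rightarrow> 'a set" where
  "gcenter G = {z \<in> carrier G. \<forall>g \<in> carrier G. z \<otimes>\<^bsub>G\<^esub> g = g \<otimes>\<^bsub>G\<^esub> z}"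

definition gcentralizer :: "('a, 'b) monoid_scheme \<Rightarrow> 'a \<Rightarrow> 'a set" where
  "gcentralizer G x = {g \<in> carrier G. g \<otimes>\<^bsub>G\<^esub> x = x \<otimes>\<^bsub>G\<^esub> g}"

definition finitely_generated_group :: "('a, 'b) monoid_scheme \<Rightarrow> bool" where
  "finitely_generated_group G \<longleftrightarrow> (\<exists>S. finite S \<and> S \<subseteq> carrier G \<and> generate G S = carrier G)"

definition torsion_free_group :: "('a, 'b) monoid_scheme \<Rightarrow> bool" where
  "torsion_free_group G \<longleftrightarrow>
     (\<forall>g \<in> carrier G. \<forall>k::nat. k > 0 \<longrightarrow> g [^]\<^bsub>G\<^esub> k = \<one>\<^bsub>G\<^esub> \<longrightarrow> g = \<one>\<^bsub>G\<^esub>)"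

definition two_step_nilpotent :: "('a, 'b) monoid_scheme \<Rightarrow> bool" where
  "two_step_nilpotent G \<longleftrightarrow> derived_sub G \<subseteq> gcenter G"

definition c_small :: "('a, 'b) monoid_scheme \<Rightarrow> 'a \<Rightarrow> bool" where
  "c_small G g \<longleftrightarrow>
     gcentralizer G g = {g [^]\<^bsub>G\<^esub> (t::int) \<otimes>\<^bsub>G\<^esub> z | t z. z \<in> gcenter G}"

definition gprod :: "('a, 'b) monoid_scheme \<Rightarrow> (nat \<Rightarrow> 'a) \<Rightarrow> nat \<Rightarrow> 'a" where
  "gprod G x k = foldr (\<lambda>i acc. x i \<otimes>\<^bsub>G\<^esub> acc) [0..<k] \<one>\<^bsub>G\<^esub>"

definition expvec :: "nat \<Rightarrow> (nat \<Rightarrow> int) set" where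
  "expvec k = {t. \<forall>i \<ge> k. t i = 0}"

text \<open>Malcev basis (A;C) = (a_0..a_{n-1}; c_0..c_{m-1}):
  C is a basis of the free abelian subgroup \<langle>C\<rangle>, G' \<le> \<langle>C\<rangle> \<le> Z(G),
  and G/\<langle>C\<rangle> is free abelian with basis a_i\<langle>C\<rangle>, i.e. every g lies in exactly
  one coset (a_0^t_0 ... a_{n-1}^t_{n-1})\<langle>C\<rangle>.\<close>
definition malcev_basis ::
    "('a, 'b) monoid_scheme \<Rightarrow> (nat \<Rightarrow> 'a) \<Rightarrow> nat \<Rightarrow> (nat \<Rightarrow> 'a) \<Rightarrow> nat \<Rightarrow> bool" where
  "malcev_basis G a n c m \<longleftrightarrow>
     (\<forall>i < n. a i \<in> carrier G) \<and> (\<forall>j < m. c j \<in> carrier G) \<and>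
     (\<forall>t \<in> expvec m. \<forall>t' \<in> expvec m.
        gprod G (\<lambda>j. c j [^]\<^bsub>G\<^esub> t j) m = gprod G (\<lambda>j. c j [^]\<^bsub>G\<^esub> t' j) m \<longrightarrow> t = t') \<and>
     derived_sub G \<subseteq> generate G (c ` {..<m}) \<and>
     generate G (c ` {..<m}) \<subseteq> gcenter G \<and>
     (\<forall>g \<in> carrier G. \<exists>!t. t \<in> expvec n \<and>
        g \<in> gprod G (\<lambda>i. a i [^]\<^bsub>G\<^esub> t i) n <#\<^bsub>G\<^esub> generate G (c ` {..<m}))"

definition Mgrp :: "('a, 'b) monoid_scheme \<Rightarrow> 'a set monoid" where
  "Mgrp G = FactGroup G (gcenter G)"

definition Ngrp :: "('a, 'b) monoid_scheme \<Rightarrow> ('a, 'b) monoid_scheme" where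
  "Ngrp G = G\<lparr>carrier := derived_sub G\<rparr>"

text \<open>f(gZ(G), hZ(G)) = [g,h] (well defined since G' is central).\<close>
definition cform :: "('a, 'b) monoid_scheme \<Rightarrow> 'a set \<Rightarrow> 'a set \<Rightarrow> 'a" where
  "cform G P Q = gcomm G (SOME g. g \<in> P) (SOME h. h \<in> Q)"

definition endo_ring :: "('c, 'd) monoid_scheme \<Rightarrow> ('c \<Rightarrow> 'c) ring" where
  "endo_ring H = \<lparr>carrier = {h \<in> hom H H. h \<in> extensional (carrier H)},
     mult = (\<lambda>s t. restrict (s \<circ> t) (carrier H)),
     one = restrict id (carrier H),
     zero = restrict (\<lambda>x. \<one>\<^bsub>H\<^esub>) (carrier H),
     add = (\<lambda>s t. restrict (\<lambda>x. s x \<otimes>\<^bsub>H\<^esub> t x) (carrier H))\<rparr>"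

text \<open>A ring of scalars, identified with its (faithful) image in End(M): a commutative
  subring S of End(M) together with a faithful action (injective unital ring
  homomorphism) of S on N such that f(sx,y) = f(x,sy) = s f(x,y).\<close>
definition ring_of_scalars :: "('a, 'b) monoid_scheme \<Rightarrow> ('a set \<Rightarrow> 'a set) set \<Rightarrow> bool" where
  "ring_of_scalars G S \<longleftrightarrow>
     subcring S (endo_ring (Mgrp G)) \<and>
     (\<exists>\<phi>. \<phi> \<in> ring_hom ((endo_ring (Mgrp G))\<lparr>carrier := S\<rparr>) (endo_ring (Ngrp G)) \<and>
          inj_on \<phi> S \<and>
          (\<forall>s \<in> S. \<forall>x \<in> carrier (Mgrp G). \<forall>y \<in> carrier (Mgrp G).
              cform G (s x) y = \<phi> s (cform G x y) \<and>
              cform G x (s y) = \<phi> s (cform G x y)))"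

definition maximal_ring_of_scalars :: "('a, 'b) monoid_scheme \<Rightarrow> ('a set \<Rightarrow> 'a set) set \<Rightarrow> bool" where
  "maximal_ring_of_scalars G S \<longleftrightarrow>
     ring_of_scalars G S \<and> (\<forall>S'. ring_of_scalars G S' \<longrightarrow> S' \<subseteq> S)"

end

theory Submission
  imports Defs "HOL-Algebra.Multiplicative_Group"
begin

text \<open>
  In a group of nilpotency class 2 the commutator is bi-multiplicative and depends only on
  classes modulo the centre, so each power map \<open>x \<mapsto> x^k\<close> of \<open>M = G/Z(G)\<close>, acting on
  \<open>N = G'\<close> by \<open>y \<mapsto> y^k\<close>, is a scalar; a non-trivial commutator has infinite order, so
  these power maps form a copy of \<open>\<int>\<close>. Conversely, a scalar \<open>s\<close> satisfies
  \<open>f(s x, x) = s f(x, x) = 1\<close>, so \<open>s(a\<^sub>i Z)\<close> lies in the centralizer of \<open>a\<^sub>i\<close> modulo the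
  centre, and c-smallness gives \<open>s(a\<^sub>i Z) = (a\<^sub>i Z)^t\<^sub>i\<close>. Then \<open>f(s a\<^sub>i, a\<^sub>j) = f(a\<^sub>i, s a\<^sub>j)\<close>
  reads \<open>[a\<^sub>i, a\<^sub>j]^t\<^sub>i = [a\<^sub>i, a\<^sub>j]^t\<^sub>j\<close>, so torsion-freeness makes all \<open>t\<^sub>i\<close> equal, and
  since the \<open>a\<^sub>i\<close> generate \<open>G\<close> modulo the centre, \<open>s\<close> is a power map.
\<close>

definition power_endo :: "('c, 'd) monoid_scheme \<Rightarrow> int \<Rightarrow> 'c \<Rightarrow> 'c" where
  "power_endo H k = (\<lambda>x\<in>carrier H. x [^]\<^bsub>H\<^esub> k)"

lemma (in group) torsion_free_int_pow_eq_one: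
  assumes "torsion_free_group G" and x: "x \<in> carrier G" "x \<noteq> \<one>" and "x [^] (k::int) = \<one>"
  shows "k = 0"
proof -
  have "ord x = 0"
    using assms unfolding torsion_free_group_def by (auto simp: ord_eq_0)
  thus ?thesis using assms(4) int_pow_eq_id[OF x(1)] by simp
qed

context comm_group
begin

lemma power_endo_in_endo_ring: "power_endo G k \<in> carrier (endo_ring G)"
  by (auto intro!: homI simp: endo_ring_def power_endo_def int_pow_distrib)

lemma endo_ring_add_power_endo:
  "power_endo G k \<oplus>\<^bsub>endo_ring G\<^esub> power_endo G l = power_endo G (k + l)"
  by (auto simp: endo_ring_def power_endo_def int_pow_mult intro!: ext)

lemma endo_ring_mult_power_endo:
  "power_endo G k \<otimes>\<^bsub>endo_ring G\<^esub> power_endo G l = power_endo G (k * l)"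
  by (auto simp: endo_ring_def power_endo_def int_pow_pow mult.commute intro!: ext)

lemma endo_ring_one: "\<one>\<^bsub>endo_ring G\<^esub> = power_endo G 1"
  by (auto simp: endo_ring_def power_endo_def intro!: ext)

lemma endo_ring_zero: "\<zero>\<^bsub>endo_ring G\<^esub> = power_endo G 0"
  by (auto simp: endo_ring_def power_endo_def intro!: ext)

lemma endo_ring_a_inv_power_endo: "\<ominus>\<^bsub>endo_ring G\<^esub> power_endo G k = power_endo G (- k)"
  unfolding a_inv_def m_inv_def
proof (rule the_equality)
  let ?E = "add_monoid (endo_ring G)"
  show "power_endo G (- k) \<in> carrier ?E \<and> power_endo G k \<otimes>\<^bsub>?E\<^esub> power_endo G (- k) = \<one>\<^bsub>?E\<^esub> \<and>
      power_endo G (- k) \<otimes>\<^bsub>?E\<^esub> power_endo G k = \<one>\<^bsub>?E\<^esub>"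
    using power_endo_in_endo_ring endo_ring_add_power_endo[of k "- k"]
      endo_ring_add_power_endo[of "- k" k] endo_ring_zero by simp
  fix y assume "y \<in> carrier ?E \<and> power_endo G k \<otimes>\<^bsub>?E\<^esub> y = \<one>\<^bsub>?E\<^esub> \<and> y \<otimes>\<^bsub>?E\<^esub> power_endo G k = \<one>\<^bsub>?E\<^esub>"
  hence y: "y \<in> hom G G" "y \<in> extensional (carrier G)"
    and sum: "(\<lambda>x\<in>carrier G. power_endo G k x \<otimes> y x) = (\<lambda>x\<in>carrier G. \<one>)"
    by (auto simp: endo_ring_def)
  show "y = power_endo G (- k)"
  proof (rule extensionalityI[OF y(2)])
    show "power_endo G (- k) \<in> extensional (carrier G)" by (simp add: power_endo_def)
    fix x assume x: "x \<in> carrier G"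
    have "x [^] k \<otimes> y x = \<one>" using fun_cong[OF sum, of x] x by (simp add: power_endo_def)
    moreover have "y x \<in> carrier G" using y(1) x by (auto simp: hom_def)
    ultimately have "y x = inv (x [^] k)"
      using inv_equality[of "y x" "x [^] k"] m_comm[of "x [^] k" "y x"] x by simp
    thus "y x = power_endo G (- k) x" using x by (simp add: power_endo_def int_pow_neg)
  qed
qed

lemma power_endo_ring_hom: "power_endo G \<in> ring_hom INTEG (endo_ring G)"
  by (rule ring_hom_memI)
    (simp_all add: INTEG_def power_endo_in_endo_ring endo_ring_add_power_endo
      endo_ring_mult_power_endo endo_ring_one)

lemma range_power_endo_subcring: "subcring (range (power_endo G)) (endo_ring G)"
proof -
  have "inv\<^bsub>add_monoid (endo_ring G)\<^esub> s \<in> range (power_endo G)" if "s \<in> range (power_endo G)" for s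
    using that endo_ring_a_inv_power_endo unfolding a_inv_def by auto
  thus ?thesis
    unfolding subcring_def subring_def subcring_axioms_def subgroup_def submonoid_def
    by (auto simp: power_endo_in_endo_ring endo_ring_add_power_endo endo_ring_mult_power_endo
        endo_ring_one endo_ring_zero mult.commute)
qed

lemma power_endo_inj:
  assumes x: "x \<in> carrier G" and infinite_order: "\<And>k::int. x [^] k = \<one> \<Longrightarrow> k = 0"
  shows "inj (power_endo G)"
proof (rule injI)
  fix k l assume "power_endo G k = power_endo G l"
  hence "power_endo G k x = power_endo G l x" by simp
  hence "x [^] k = x [^] l" using x by (simp add: power_endo_def)
  hence "x [^] (k - l) = \<one>" using x by (simp add: int_pow_diff)
  thus "k = l" using infinite_order by force
qed

lemma power_endo_inverse_ring_iso:
  assumes "inj (power_endo G)"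
  shows "inv_into UNIV (power_endo G) \<in> ring_iso ((endo_ring G)\<lparr>carrier := range (power_endo G)\<rparr>) INTEG"
  unfolding ring_iso_def
proof (intro CollectI conjI)
  show "inv_into UNIV (power_endo G) \<in> ring_hom ((endo_ring G)\<lparr>carrier := range (power_endo G)\<rparr>) INTEG"
    by (rule ring_hom_memI)
      (auto simp: INTEG_def inv_f_f[OF assms] endo_ring_add_power_endo endo_ring_mult_power_endo
        endo_ring_one)
  show "bij_betw (inv_into UNIV (power_endo G))
      (carrier ((endo_ring G)\<lparr>carrier := range (power_endo G)\<rparr>)) (carrier INTEG)"
    using bij_betw_inv_into[OF inj_on_imp_bij_betw[OF assms]] by (simp add: INTEG_def)
qed

end

context group
begin

lemma gcenter_subset: "gcenter G \<subseteq> carrier G"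
  by (auto simp: gcenter_def)

lemma gcenter_commute: "z \<in> gcenter G \<Longrightarrow> g \<in> carrier G \<Longrightarrow> z \<otimes> g = g \<otimes> z"
  by (auto simp: gcenter_def)

lemma subgroup_gcenter: "subgroup (gcenter G) G"
proof
  show "gcenter G \<subseteq> carrier G" by (rule gcenter_subset)
  show "\<one> \<in> gcenter G" by (auto simp: gcenter_def)
  fix x y assume x: "x \<in> gcenter G" and y: "y \<in> gcenter G"
  have xc: "x \<in> carrier G" and yc: "y \<in> carrier G" using x y gcenter_subset by auto
  show "x \<otimes> y \<in> gcenter G"
    unfolding gcenter_def
  proof (intro CollectI conjI ballI)
    fix g assume g: "g \<in> carrier G"
    have "x \<otimes> y \<otimes> g = x \<otimes> (g \<otimes> y)" using gcenter_commute[OF y g] by (simp add: m_assoc xc yc g)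
    also have "\<dots> = g \<otimes> x \<otimes> y" using gcenter_commute[OF x g] by (simp add: m_assoc[symmetric] xc yc g)
    finally show "x \<otimes> y \<otimes> g = g \<otimes> (x \<otimes> y)" by (simp add: m_assoc xc yc g)
  qed (simp add: xc yc)
  show "inv x \<in> gcenter G"
    unfolding gcenter_def
  proof (intro CollectI conjI ballI)
    fix g assume g: "g \<in> carrier G"
    have "inv (x \<otimes> inv g) = inv (inv g \<otimes> x)" using gcenter_commute[OF x] g by simp
    thus "inv x \<otimes> g = g \<otimes> inv x" using xc g by (simp add: inv_mult_group)
  qed (simp add: xc)
qed

lemma normal_gcenter: "gcenter G \<lhd> G"
  unfolding normal_inv_iff
proof (intro conjI ballI)
  show "subgroup (gcenter G) G" by (rule subgroup_gcenter)
  fix x h assume x: "x \<in> carrier G" and h: "h \<in> gcenter G"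
  have "x \<otimes> h \<otimes> inv x = h \<otimes> x \<otimes> inv x" using gcenter_commute[OF h x] by simp
  also have "\<dots> = h" using h gcenter_subset x by (auto simp: m_assoc)
  finally show "x \<otimes> h \<otimes> inv x \<in> gcenter G" using h by simp
qed

lemma gcomm_closed: "g \<in> carrier G \<Longrightarrow> h \<in> carrier G \<Longrightarrow> gcomm G g h \<in> carrier G"
  by (simp add: gcomm_def)

lemma mult_eq_mult_gcomm: "g \<in> carrier G \<Longrightarrow> h \<in> carrier G \<Longrightarrow> g \<otimes> h = h \<otimes> g \<otimes> gcomm G g h"
  by (simp add: gcomm_def m_assoc flip: m_assoc[of g "inv g"] m_assoc[of h "inv h"])

lemma gcomm_eq_inv_mult: "g \<in> carrier G \<Longrightarrow> h \<in> carrier G \<Longrightarrow> gcomm G g h = inv (h \<otimes> g) \<otimes> (g \<otimes> h)"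
  by (simp add: gcomm_def inv_mult_group m_assoc)

lemma gcomm_eq_one_iff: "g \<in> carrier G \<Longrightarrow> h \<in> carrier G \<Longrightarrow> gcomm G g h = \<one> \<longleftrightarrow> g \<otimes> h = h \<otimes> g"
  by (metis mult_eq_mult_gcomm gcomm_eq_inv_mult r_one l_inv m_closed)

lemma gcomm_self: "g \<in> carrier G \<Longrightarrow> gcomm G g g = \<one>"
  using gcomm_eq_one_iff by blast

lemma gcomm_swap: "g \<in> carrier G \<Longrightarrow> h \<in> carrier G \<Longrightarrow> gcomm G h g = inv (gcomm G g h)"
  by (simp only: gcomm_eq_inv_mult inv_mult_group m_closed inv_closed inv_inv)

lemma gcomm_in_derived_sub: "g \<in> carrier G \<Longrightarrow> h \<in> carrier G \<Longrightarrow> gcomm G g h \<in> derived_sub G"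
  unfolding derived_sub_def by (rule generate.incl) blast

lemma subgroup_derived_sub: "subgroup (derived_sub G) G"
  unfolding derived_sub_def by (rule generate_is_subgroup) (auto intro: gcomm_closed)


lemma subgroup_hom_equalizer:
  assumes "group H" and f: "f \<in> hom G H" and g: "g \<in> hom G H"
  shows "subgroup {x \<in> carrier G. f x = g x} G"
proof -
  interpret f: group_hom G H f using assms by (simp add: group_hom_def group_hom_axioms_def is_group)
  interpret g: group_hom G H g using assms by (simp add: group_hom_def group_hom_axioms_def is_group)
  show ?thesis by (rule subgroupI) auto
qed

lemma gprod_in_subgroup:
  assumes "subgroup H G" and "\<forall>i<k. x i \<in> H"
  shows "gprod G x k \<in> H"
proof -
  have "foldr (\<lambda>i acc. x i \<otimes> acc) is \<one> \<in> H" if "set is \<subseteq> {..<k}" for "is"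
    using that assms by (induction "is") (auto intro: subgroup.m_closed subgroup.one_closed)
  from this[of "[0..<k]"] show ?thesis unfolding gprod_def by (simp add: atLeast0LessThan)
qed

lemma malcev_basis_generate:
  assumes "malcev_basis G a n c m"
  shows "carrier G \<subseteq> generate G (a ` {..<n} \<union> gcenter G)"
proof
  let ?H = "generate G (a ` {..<n} \<union> gcenter G)"
  have "\<forall>i<n. a i \<in> carrier G" using assms unfolding malcev_basis_def by blast
  hence subgroup_H: "subgroup ?H G" using gcenter_subset by (intro generate_is_subgroup) auto
  have cosets: "\<forall>g \<in> carrier G. \<exists>!t. t \<in> expvec n \<and> g \<in> gprod G (\<lambda>i. a i [^] t i) n <# generate G (c ` {..<m})"
    using assms unfolding malcev_basis_def by (elim conjE)
  fix g assume "g \<in> carrier G"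
  then obtain t :: "nat \<Rightarrow> int" where "g \<in> gprod G (\<lambda>i. a i [^] t i) n <# generate G (c ` {..<m})"
    using ex1_implies_ex[OF bspec[OF cosets]] by blast
  moreover have "generate G (c ` {..<m}) \<subseteq> gcenter G"
    using assms unfolding malcev_basis_def by blast
  ultimately obtain h where h: "h \<in> gcenter G" and g: "g = gprod G (\<lambda>i. a i [^] t i) n \<otimes> h"
    unfolding l_coset_def by blast
  have "a i [^] t i \<in> ?H" if "i < n" for i
    using that by (intro subgroup_int_pow_closed[OF subgroup_H] generate.incl) simp
  hence "gprod G (\<lambda>i. a i [^] t i) n \<in> ?H" by (intro gprod_in_subgroup[OF subgroup_H]) simp
  moreover have "h \<in> ?H" using h by (intro generate.incl) simp
  ultimately show "g \<in> ?H" using g subgroup.m_closed[OF subgroup_H] by simp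
qed

end

locale two_step_nilpotent_group = group G for G (structure) +
  assumes derived_sub_gcenter: "derived_sub G \<subseteq> gcenter G"
begin

lemma gcomm_in_gcenter: "g \<in> carrier G \<Longrightarrow> h \<in> carrier G \<Longrightarrow> gcomm G g h \<in> gcenter G"
  using gcomm_in_derived_sub derived_sub_gcenter by blast

lemma gcomm_mult_left:
  assumes x: "x \<in> carrier G" and y: "y \<in> carrier G" and h: "h \<in> carrier G"
  shows "gcomm G (x \<otimes> y) h = gcomm G x h \<otimes> gcomm G y h"
proof -
  let ?a = "gcomm G x h" and ?b = "gcomm G y h"
  have a: "?a \<in> gcenter G" using gcomm_in_gcenter x h by auto
  have ac: "?a \<in> carrier G" and bc: "?b \<in> carrier G" using gcomm_closed x y h by auto
  have "x \<otimes> y \<otimes> h = x \<otimes> h \<otimes> y \<otimes> ?b" using mult_eq_mult_gcomm[OF y h] by (simp add: m_assoc x y h bc)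
  also have "\<dots> = h \<otimes> x \<otimes> (?a \<otimes> y) \<otimes> ?b" using mult_eq_mult_gcomm[OF x h] by (simp add: m_assoc x y h ac)
  also have "\<dots> = h \<otimes> (x \<otimes> y) \<otimes> (?a \<otimes> ?b)"
    using gcenter_commute[OF a y] by (simp add: m_assoc x y h ac bc)
  finally have "x \<otimes> y \<otimes> h = h \<otimes> (x \<otimes> y) \<otimes> (?a \<otimes> ?b)" .
  thus ?thesis
    unfolding gcomm_eq_inv_mult[OF m_closed[OF x y] h] by (metis inv_solve_left' m_closed x y h ac bc)
qed

lemma gcomm_int_pow_left:
  "g \<in> carrier G \<Longrightarrow> h \<in> carrier G \<Longrightarrow> gcomm G (g [^] (k::int)) h = gcomm G g h [^] k"
  using hom_int_pow[of "\<lambda>x. gcomm G x h" G G] is_group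
  by (simp add: homI gcomm_closed gcomm_mult_left)

lemma gcomm_int_pow_right:
  assumes "g \<in> carrier G" "h \<in> carrier G"
  shows "gcomm G g (h [^] (k::int)) = gcomm G g h [^] k"
proof -
  have "gcomm G g (h [^] k) = inv (gcomm G h g [^] k)"
    using gcomm_swap[of "h [^] k" g] gcomm_int_pow_left assms by simp
  also have "\<dots> = gcomm G g h [^] k"
    using assms gcomm_closed gcomm_swap[of g h] by (simp add: int_pow_inv)
  finally show ?thesis .
qed

lemma gcomm_gcenter_mult_left:
  assumes z: "z \<in> gcenter G" and g: "g \<in> carrier G" and h: "h \<in> carrier G"
  shows "gcomm G (z \<otimes> g) h = gcomm G g h"
proof -
  have zc: "z \<in> carrier G" using z gcenter_subset by auto
  have "gcomm G z h = \<one>" using gcomm_eq_one_iff[OF zc h] gcenter_commute[OF z h] by blast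
  thus ?thesis using gcomm_mult_left[OF zc g h] gcomm_closed[OF g h] by simp
qed

lemma gcomm_gcenter_mult_right:
  assumes z: "z \<in> gcenter G" and g: "g \<in> carrier G" and h: "h \<in> carrier G"
  shows "gcomm G g (z \<otimes> h) = gcomm G g h"
  using gcomm_swap[of "z \<otimes> h" g] gcomm_gcenter_mult_left[OF z h g] gcomm_swap[of h g]
    gcenter_subset z g h by auto

abbreviation "M \<equiv> Mgrp G"
abbreviation "N \<equiv> Ngrp G"
abbreviation "proj g \<equiv> gcenter G #> g"

lemma group_Mgrp: "group M"
  unfolding Mgrp_def by (rule normal.factorgroup_is_group[OF normal_gcenter])

lemma proj_hom: "(\<lambda>g. proj g) \<in> hom G M"
  unfolding Mgrp_def by (rule normal.r_coset_hom_Mod[OF normal_gcenter])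

lemma carrier_Mgrp: "carrier M = proj ` carrier G"
  unfolding Mgrp_def carrier_FactGroup by (simp add: r_coset_def)

lemma proj_in_carrier: "g \<in> carrier G \<Longrightarrow> proj g \<in> carrier M"
  using carrier_Mgrp by auto

lemma proj_mult: "g \<in> carrier G \<Longrightarrow> h \<in> carrier G \<Longrightarrow> proj g \<otimes>\<^bsub>M\<^esub> proj h = proj (g \<otimes> h)"
  using proj_hom by (simp add: hom_mult)

lemma proj_int_pow: "g \<in> carrier G \<Longrightarrow> proj g [^]\<^bsub>M\<^esub> (k::int) = proj (g [^] k)"
  unfolding Mgrp_def using normal.FactGroup_int_pow[OF normal_gcenter] by (simp add: r_coset_def)

lemma proj_gcenter_mult: "z \<in> gcenter G \<Longrightarrow> g \<in> carrier G \<Longrightarrow> proj (z \<otimes> g) = proj g"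
  using repr_independence[OF rcosI[OF _ gcenter_subset] _ subgroup_gcenter] by simp

lemma proj_eq_one_iff: "g \<in> carrier G \<Longrightarrow> proj g = \<one>\<^bsub>M\<^esub> \<longleftrightarrow> g \<in> gcenter G"
  using rcos_self[OF _ subgroup_gcenter] coset_join2[OF _ subgroup_gcenter]
  by (auto simp: Mgrp_def)

lemma comm_group_Mgrp: "comm_group M"
proof (rule group.group_comm_groupI[OF group_Mgrp])
  fix x y assume "x \<in> carrier M" "y \<in> carrier M"
  then obtain g h where g: "g \<in> carrier G" "x = proj g" and h: "h \<in> carrier G" "y = proj h"
    using carrier_Mgrp by auto
  have "g \<otimes> h = gcomm G g h \<otimes> (h \<otimes> g)"
    using mult_eq_mult_gcomm[OF g(1) h(1)] gcenter_commute[OF gcomm_in_gcenter] gcomm_closed g h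
    by (simp add: m_assoc)
  hence "proj (g \<otimes> h) = proj (h \<otimes> g)" using proj_gcenter_mult gcomm_in_gcenter g h by simp
  thus "x \<otimes>\<^bsub>M\<^esub> y = y \<otimes>\<^bsub>M\<^esub> x" using g h proj_mult by simp
qed

lemma cform_proj:
  assumes g: "g \<in> carrier G" and h: "h \<in> carrier G"
  shows "cform G (proj g) (proj h) = gcomm G g h"
proof -
  have "g \<in> proj g" "h \<in> proj h" using rcos_self[OF _ subgroup_gcenter] g h by auto
  hence "(SOME x. x \<in> proj g) \<in> proj g" "(SOME x. x \<in> proj h) \<in> proj h" by (metis someI)+
  then obtain z w where zw: "z \<in> gcenter G" "w \<in> gcenter G"
    and "(SOME x. x \<in> proj g) = z \<otimes> g" "(SOME x. x \<in> proj h) = w \<otimes> h"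
    by (auto simp: r_coset_def)
  thus ?thesis
    using gcomm_gcenter_mult_left gcomm_gcenter_mult_right zw g h gcenter_subset
    by (simp add: cform_def subsetD)
qed

lemma cform_self: "x \<in> carrier M \<Longrightarrow> cform G x x = \<one>"
  using carrier_Mgrp cform_proj gcomm_self by auto

lemma comm_group_Ngrp: "comm_group N"
proof -
  have "group N" unfolding Ngrp_def by (rule subgroup_imp_group[OF subgroup_derived_sub])
  thus ?thesis
    by (rule group.group_comm_groupI)
      (use derived_sub_gcenter gcenter_commute subgroup.subset[OF subgroup_derived_sub] in
        \<open>auto simp: Ngrp_def\<close>)
qed

lemma Ngrp_int_pow: "y \<in> derived_sub G \<Longrightarrow> y [^]\<^bsub>N\<^esub> (k::int) = y [^] k"
  unfolding Ngrp_def by (rule int_pow_consistent[OF subgroup_derived_sub, symmetric])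

lemma cform_in_derived_sub: "x \<in> carrier M \<Longrightarrow> y \<in> carrier M \<Longrightarrow> cform G x y \<in> derived_sub G"
  using carrier_Mgrp cform_proj gcomm_in_derived_sub by auto

lemma cform_power_endo_left:
  "x \<in> carrier M \<Longrightarrow> y \<in> carrier M \<Longrightarrow> cform G (power_endo M k x) y = cform G x y [^] k"
  using carrier_Mgrp by (auto simp: power_endo_def proj_int_pow cform_proj gcomm_int_pow_left)

lemma cform_power_endo_right:
  "x \<in> carrier M \<Longrightarrow> y \<in> carrier M \<Longrightarrow> cform G x (power_endo M k y) = cform G x y [^] k"
  using carrier_Mgrp by (auto simp: power_endo_def proj_int_pow cform_proj gcomm_int_pow_right)

lemma ring_of_scalars_subset_endo_ring: "ring_of_scalars G S \<Longrightarrow> S \<subseteq> carrier (endo_ring M)"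
  unfolding ring_of_scalars_def subcring_def subring_def submonoid_def by blast

lemma ring_of_scalars_cform_swap:
  assumes "ring_of_scalars G S" "s \<in> S" "u \<in> carrier M" "v \<in> carrier M"
  shows "cform G (s u) v = cform G u (s v)"
proof -
  obtain \<phi> where "\<forall>s \<in> S. \<forall>u \<in> carrier M. \<forall>v \<in> carrier M.
      cform G (s u) v = \<phi> s (cform G u v) \<and> cform G u (s v) = \<phi> s (cform G u v)"
    using assms(1) unfolding ring_of_scalars_def by blast
  thus ?thesis using assms(2-4) by simp
qed

lemma ring_of_scalars_cform_self:
  assumes "ring_of_scalars G S" "s \<in> S" "u \<in> carrier M"
  shows "cform G (s u) u = \<one>"
proof -
  obtain \<phi> where \<phi>: "\<phi> \<in> ring_hom ((endo_ring M)\<lparr>carrier := S\<rparr>) (endo_ring N)"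
    and "cform G (s u) u = \<phi> s (cform G u u)"
    using assms unfolding ring_of_scalars_def by blast
  moreover have "\<phi> s \<in> hom N N"
    using ring_hom_closed[OF \<phi>] assms(2) by (auto simp: endo_ring_def)
  hence "\<phi> s \<one> = \<one>"
    using hom_one comm_group.axioms(2)[OF comm_group_Ngrp] by (fastforce simp: Ngrp_def)
  ultimately show ?thesis using cform_self assms(3) by simp
qed

lemma scalar_on_c_small:
  assumes "ring_of_scalars G S" "s \<in> S" and g: "g \<in> carrier G" "c_small G g"
  obtains t :: int where "s (proj g) = proj g [^]\<^bsub>M\<^esub> t"
proof -
  have "s \<in> hom M M" using ring_of_scalars_subset_endo_ring assms(1,2) by (auto simp: endo_ring_def)
  hence "s (proj g) \<in> carrier M" using proj_in_carrier[OF g(1)] by (auto simp: hom_def)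
  then obtain h where h: "h \<in> carrier G" "s (proj g) = proj h"
    using carrier_Mgrp by auto
  have "gcomm G h g = \<one>"
    using ring_of_scalars_cform_self[OF assms(1,2) proj_in_carrier[OF g(1)]] h cform_proj g by simp
  hence "h \<in> gcentralizer G g" using gcomm_eq_one_iff h g by (simp add: gcentralizer_def)
  hence "h \<in> {g [^] (t::int) \<otimes> z | t z. z \<in> gcenter G}" using g(2) by (simp add: c_small_def)
  then obtain t z where "h = g [^] (t::int) \<otimes> z" "z \<in> gcenter G" by blast
  hence "proj h = proj (g [^] t)"
    using proj_gcenter_mult[of z "g [^] t"] gcenter_commute[of z "g [^] t"] g by simp
  thus ?thesis using that h proj_int_pow g by simp
qed

lemma endo_eq_power_endo_on_generators:
  assumes s: "s \<in> carrier (endo_ring M)"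
    and X: "X \<subseteq> carrier G" and generate: "carrier G \<subseteq> generate G (X \<union> gcenter G)"
    and on_X: "\<forall>x \<in> X. s (proj x) = proj x [^]\<^bsub>M\<^esub> k"
  shows "s = power_endo M k"
proof -
  let ?E = "{g \<in> carrier G. compose (carrier G) s proj g = compose (carrier G) (power_endo M k) proj g}"
  have s_hom: "s \<in> hom M M" and power_hom: "power_endo M k \<in> hom M M"
    using s comm_group.power_endo_in_endo_ring[OF comm_group_Mgrp] by (auto simp: endo_ring_def)
  have E: "subgroup ?E G"
    using hom_compose[OF proj_hom s_hom] hom_compose[OF proj_hom power_hom]
    by (rule subgroup_hom_equalizer[OF group_Mgrp])
  have center: "gcenter G \<subseteq> ?E"
  proof
    fix z assume z: "z \<in> gcenter G"
    hence "proj z = \<one>\<^bsub>M\<^esub>" using proj_eq_one_iff gcenter_subset by blast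
    thus "z \<in> ?E"
      using z gcenter_subset hom_one[OF s_hom group_Mgrp group_Mgrp] group.int_pow_one[OF group_Mgrp]
        monoid.one_closed[OF group.is_monoid[OF group_Mgrp]]
      by (auto simp: compose_def power_endo_def)
  qed
  have "X \<subseteq> ?E" using on_X X proj_in_carrier by (auto simp: compose_def power_endo_def)
  hence "generate G (X \<union> gcenter G) \<subseteq> ?E" using generate_subgroup_incl[OF _ E] center by simp
  hence "carrier G \<subseteq> ?E" using generate by (rule order_trans[rotated])
  thus ?thesis
    using s carrier_Mgrp
    by (intro extensionalityI[of s "carrier M"]) (auto simp: endo_ring_def power_endo_def compose_def)
qed

context
  fixes x y
  assumes torsion_free: "torsion_free_group G"
    and x: "x \<in> carrier G" and y: "y \<in> carrier G" and noncommuting: "gcomm G x y \<noteq> \<one>"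
begin

lemma gcomm_int_pow_eq_one: "gcomm G x y [^] (k::int) = \<one> \<Longrightarrow> k = 0"
  using torsion_free_int_pow_eq_one[OF torsion_free gcomm_closed[OF x y] noncommuting] .

lemma proj_int_pow_eq_one: "proj x [^]\<^bsub>M\<^esub> (k::int) = \<one>\<^bsub>M\<^esub> \<Longrightarrow> k = 0"
proof -
  assume "proj x [^]\<^bsub>M\<^esub> k = \<one>\<^bsub>M\<^esub>"
  hence "x [^] k \<in> gcenter G" using proj_int_pow proj_eq_one_iff x by simp
  hence "gcomm G (x [^] k) y = \<one>" using gcomm_eq_one_iff gcenter_commute x y by simp
  thus "k = 0" using gcomm_int_pow_left x y gcomm_int_pow_eq_one by simp
qed

lemma inj_power_endo_Mgrp: "inj (power_endo M)"
  using comm_group.power_endo_inj[OF comm_group_Mgrp proj_in_carrier[OF x]] proj_int_pow_eq_one .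

lemma inj_power_endo_Ngrp: "inj (power_endo N)"
  using comm_group.power_endo_inj[OF comm_group_Ngrp, of "gcomm G x y"]
    gcomm_in_derived_sub[OF x y] Ngrp_int_pow gcomm_int_pow_eq_one by (simp add: Ngrp_def)

lemma ring_of_scalars_power_endo: "ring_of_scalars G (range (power_endo M))"
  unfolding ring_of_scalars_def
proof (intro conjI exI[of _ "power_endo N \<circ> inv_into UNIV (power_endo M)"] ballI)
  let ?exponent = "inv_into UNIV (power_endo M)"
  have exponent_iso: "?exponent \<in> ring_iso ((endo_ring M)\<lparr>carrier := range (power_endo M)\<rparr>) INTEG"
    by (rule comm_group.power_endo_inverse_ring_iso[OF comm_group_Mgrp inj_power_endo_Mgrp])
  show "subcring (range (power_endo M)) (endo_ring M)"
    by (rule comm_group.range_power_endo_subcring[OF comm_group_Mgrp])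
  show "power_endo N \<circ> ?exponent \<in> ring_hom ((endo_ring M)\<lparr>carrier := range (power_endo M)\<rparr>) (endo_ring N)"
    using exponent_iso comm_group.power_endo_ring_hom[OF comm_group_Ngrp]
    by (auto simp: ring_iso_def intro: ring_hom_trans)
  show "inj_on (power_endo N \<circ> ?exponent) (range (power_endo M))"
    using inj_power_endo_Ngrp by (auto intro!: comp_inj_on inj_on_inv_into intro: inj_on_subset)
  fix s u v assume "s \<in> range (power_endo M)" and uv: "u \<in> carrier M" "v \<in> carrier M"
  then obtain k where "s = power_endo M k" by auto
  hence "(power_endo N \<circ> ?exponent) s (cform G u v) = power_endo N k (cform G u v)"
    using inv_f_f[OF inj_power_endo_Mgrp] by simp
  also have "\<dots> = cform G u v [^] k"
    using cform_in_derived_sub[OF uv] Ngrp_int_pow by (simp add: power_endo_def Ngrp_def)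
  finally have "(power_endo N \<circ> ?exponent) s (cform G u v) = cform G u v [^] k" .
  thus "cform G (s u) v = (power_endo N \<circ> ?exponent) s (cform G u v)"
    "cform G u (s v) = (power_endo N \<circ> ?exponent) s (cform G u v)"
    using \<open>s = power_endo M k\<close> uv cform_power_endo_left cform_power_endo_right by simp_all
qed

lemma scalar_exponents_eq:
  assumes "ring_of_scalars G S" "s \<in> S"
    and "s (proj x) = proj x [^]\<^bsub>M\<^esub> (k::int)" "s (proj y) = proj y [^]\<^bsub>M\<^esub> (l::int)"
  shows "k = l"
proof -
  have "cform G (s (proj x)) (proj y) = cform G (proj x) (s (proj y))"
    using ring_of_scalars_cform_swap[OF assms(1,2)] proj_in_carrier x y by blast
  hence "gcomm G x y [^] k = gcomm G x y [^] l"
    using assms(3,4) x y by (simp add: proj_int_pow cform_proj gcomm_int_pow_left gcomm_int_pow_right)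
  hence "gcomm G x y [^] (k - l) = \<one>" using gcomm_closed[OF x y] by (simp add: int_pow_diff)
  thus ?thesis using gcomm_int_pow_eq_one[of "k - l"] by simp
qed

end

lemma ring_of_scalars_subset_range_power_endo:
  fixes a :: "nat \<Rightarrow> 'a" and n :: nat
  assumes S: "ring_of_scalars G S" and torsion_free: "torsion_free_group G"
    and a: "\<forall>i<n. a i \<in> carrier G"
    and noncommuting: "\<forall>i<n. \<forall>j<n. i \<noteq> j \<longrightarrow> gcomm G (a i) (a j) \<noteq> \<one>"
    and c_small: "\<forall>i<n. c_small G (a i)"
    and generate: "carrier G \<subseteq> generate G (a ` {..<n} \<union> gcenter G)"
  shows "S \<subseteq> range (power_endo M)"
proof
  fix s assume s: "s \<in> S"
  have exponents: "\<forall>i \<in> {..<n}. \<exists>t::int. s (proj (a i)) = proj (a i) [^]\<^bsub>M\<^esub> t"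
  proof
    fix i assume "i \<in> {..<n}"
    hence i: "i < n" by simp
    obtain t :: int where "s (proj (a i)) = proj (a i) [^]\<^bsub>M\<^esub> t"
      by (rule scalar_on_c_small[OF S s a[rule_format, OF i] c_small[rule_format, OF i]])
    thus "\<exists>t::int. s (proj (a i)) = proj (a i) [^]\<^bsub>M\<^esub> t" ..
  qed
  obtain t :: "nat \<Rightarrow> int" where "\<forall>i \<in> {..<n}. s (proj (a i)) = proj (a i) [^]\<^bsub>M\<^esub> t i"
    using bchoice[OF exponents] by blast
  hence t: "\<And>i. i < n \<Longrightarrow> s (proj (a i)) = proj (a i) [^]\<^bsub>M\<^esub> t i" by simp
  have same_exponent: "t i = t 0" if "i < n" for i
  proof (cases "i = 0")
    case False
    have "0 < n" using that by simp
    show ?thesis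
      by (rule scalar_exponents_eq[OF torsion_free a[rule_format, OF that] a[rule_format, OF \<open>0 < n\<close>]
            noncommuting[rule_format, OF that \<open>0 < n\<close> False] S s t[OF that] t[OF \<open>0 < n\<close>]])
  qed simp
  have "s = power_endo M (t 0)"
  proof (rule endo_eq_power_endo_on_generators)
    show "s \<in> carrier (endo_ring M)" using ring_of_scalars_subset_endo_ring[OF S] s by blast
    show "a ` {..<n} \<subseteq> carrier G" using a by blast
    show "\<forall>x \<in> a ` {..<n}. s (proj x) = proj x [^]\<^bsub>M\<^esub> t 0"
    proof
      fix x assume "x \<in> a ` {..<n}"
      then obtain i where i: "i < n" "x = a i" by blast
      thus "s (proj x) = proj x [^]\<^bsub>M\<^esub> t 0" using t[OF i(1)] same_exponent[OF i(1)] by simp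
    qed
  qed (rule generate)
  thus "s \<in> range (power_endo M)" by simp
qed

end

theorem theorem3p3:
  fixes G :: "('a, 'b) monoid_scheme" and a c :: "nat \<Rightarrow> 'a" and n m :: nat
  assumes "group G"
    and "finitely_generated_group G"
    and "torsion_free_group G"
    and "two_step_nilpotent G"
    and "malcev_basis G a n c m"
    and "n \<ge> 2"
    and "\<forall>i < n. \<forall>j < n. i \<noteq> j \<longrightarrow> gcomm G (a i) (a j) \<noteq> \<one>\<^bsub>G\<^esub>"
    and "\<forall>i < n. c_small G (a i)"
  shows "\<exists>S. maximal_ring_of_scalars G S \<and> (endo_ring (Mgrp G))\<lparr>carrier := S\<rparr> \<simeq> INTEG"
proof -
  interpret two_step_nilpotent_group G
    using assms(1,4) by (simp add: two_step_nilpotent_group_def two_step_nilpotent_group_axioms_def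
        two_step_nilpotent_def)
  have a: "\<forall>i<n. a i \<in> carrier G" using assms(5) unfolding malcev_basis_def by blast
  hence a01: "a 0 \<in> carrier G" "a 1 \<in> carrier G" using assms(6) by auto
  have noncommuting: "gcomm G (a 0) (a 1) \<noteq> \<one>\<^bsub>G\<^esub>" using assms(6,7) by simp
  let ?S = "range (power_endo (Mgrp G))"
  have "maximal_ring_of_scalars G ?S"
    unfolding maximal_ring_of_scalars_def
    using ring_of_scalars_power_endo[OF assms(3) a01 noncommuting]
      ring_of_scalars_subset_range_power_endo[OF _ assms(3) a assms(7,8) malcev_basis_generate[OF assms(5)]]
    by blast
  moreover have "(endo_ring (Mgrp G))\<lparr>carrier := ?S\<rparr> \<simeq> INTEG"
    using comm_group.power_endo_inverse_ring_iso[OF comm_group_Mgrp inj_power_endo_Mgrp[OF assms(3) a01 noncommuting]]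
    unfolding is_ring_iso_def by blast
  ultimately show ?thesis by blast
qed

end
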